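(* Let $N\ge 2$ be an integer and consider the one-mode projection graph $G_N$ on the primes $\le N$ defined below. For every prime $p\le N$, the degree of $p$ in $G_N$ equals $\pi\left(\frac{N}{p}\right)$, where $\pi(x)$ is the number of primes $\le x$.
   Context: The graph $G_N$ has vertex set the primes $p\le N$. Two distinct primes $p,p'\le N$ are adjacent iff some composite integer $c\le N$ is divisible by both $p$ and $p'$ (equivalently the number of such composites, which is the weight of the edge, is positive). A prime $p$ carries a self-loop iff $p^2\le N$. The degree of $p$ is the number of distinct primes $p'\ne p$ adjacent to $p$, plus $1$ if $p$ carries a self-loop. *)

theory Defs
  imports "HOL-Computational_Algebra.Primes" Complex_Main
begin

definition prime_pi :: "real \<Rightarrow> nat" where
  "prime_pi x = card {p :: nat. prime p \<and> real p \<le> x}"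

definition adjacent :: "nat \<Rightarrow> nat \<Rightarrow> nat \<Rightarrow> bool" where
  "adjacent N p q \<longleftrightarrow> prime p \<and> prime q \<and> p \<le> N \<and> q \<le> N \<and> p \<noteq> q \<and>
     (\<exists>c :: nat. 1 < c \<and> \<not> prime c \<and> c \<le> N \<and> p dvd c \<and> q dvd c)"

definition has_loop :: "nat \<Rightarrow> nat \<Rightarrow> bool" where
  "has_loop N p \<longleftrightarrow> p ^ 2 \<le> N"

definition degree :: "nat \<Rightarrow> nat \<Rightarrow> nat" where
  "degree N p = card {q :: nat. adjacent N p q} + (if has_loop N p then 1 else 0)"

end

theory Submission
  imports Defs
begin

text \<open>Two distinct primes divide a common composite \<open>c \<le> N\<close> iff their product is at most \<open>N\<close>:
  a common multiple is a multiple of the product, and the product itself is composite.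
  Counting the neighbours of \<open>p\<close> thus counts the primes \<open>q \<noteq> p\<close> with \<open>q \<le> N / p\<close>, and the
  self-loop contributes exactly when \<open>q = p\<close> is such a prime.\<close>

lemma adjacent_iff_mult_le:
  assumes "prime p" "p \<le> N"
  shows "adjacent N p q \<longleftrightarrow> prime q \<and> q \<noteq> p \<and> p * q \<le> N"
proof
  assume "adjacent N p q"
  then obtain c where c: "1 < c" "c \<le> N" "p dvd c" "q dvd c" and q: "prime q" "q \<noteq> p"
    unfolding adjacent_def by blast
  have "coprime p q" using assms(1) q primes_coprime by metis
  hence "p * q dvd c" using c divides_mult by blast
  hence "p * q \<le> c" using c(1) by (intro dvd_imp_le) auto
  thus "prime q \<and> q \<noteq> p \<and> p * q \<le> N" using q c by simp
next
  assume q: "prime q \<and> q \<noteq> p \<and> p * q \<le> N"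
  have gt1: "p > 1" "q > 1" using assms q prime_gt_1_nat by auto
  have "\<not> prime (p * q)" using gt1 prime_product[of p q] by auto
  moreover have "1 < p * q" using gt1 by (metis less_1_mult)
  moreover have "q \<le> N"
  proof -
    have "q \<le> p * q" using gt1 by simp
    thus ?thesis using q by linarith
  qed
  moreover have "p dvd p * q" "q dvd p * q" by simp_all
  ultimately show "adjacent N p q" unfolding adjacent_def using q assms by blast
qed

lemma prime_pi_div_eq_card:
  assumes "p > 0"
  shows "prime_pi (real N / real p) = card {q. prime q \<and> p * q \<le> N}"
proof -
  have "real q \<le> real N / real p \<longleftrightarrow> p * q \<le> N" for q
  proof -
    have "real q \<le> real N / real p \<longleftrightarrow> real p * real q \<le> real N"
      using assms by (simp add: field_simps)
    also have "\<dots> \<longleftrightarrow> p * q \<le> N" by (metis of_nat_le_iff of_nat_mult)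
    finally show ?thesis .
  qed
  thus ?thesis unfolding prime_pi_def by simp
qed

lemma finite_mult_le:
  assumes "p > 0"
  shows "finite {q :: nat. P q \<and> p * q \<le> N}"
proof (rule finite_subset[of _ "{..N}"])
  show "{q. P q \<and> p * q \<le> N} \<subseteq> {..N}"
  proof
    fix q assume "q \<in> {q. P q \<and> p * q \<le> N}"
    hence "p * q \<le> N" by simp
    moreover have "q \<le> p * q" using assms by simp
    ultimately have "q \<le> N" by linarith
    thus "q \<in> {..N}" by simp
  qed
qed simp

theorem mainTheorem8:
  fixes N p :: nat
  assumes "N \<ge> 2" and "prime p" and "p \<le> N"
  shows "degree N p = prime_pi (real N / real p)"
proof -
  have p0: "p > 0" using assms(2) prime_gt_0_nat by blast
  let ?Q = "{q. prime q \<and> p * q \<le> N}"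
  have neighbours: "{q. adjacent N p q} = ?Q - {p}"
    using adjacent_iff_mult_le[OF assms(2,3)] by blast
  have loop: "has_loop N p \<longleftrightarrow> p \<in> ?Q"
    using assms(2) by (simp add: has_loop_def power2_eq_square)
  have "degree N p = card (?Q - {p}) + (if p \<in> ?Q then 1 else 0)"
    by (simp only: degree_def neighbours loop)
  also have "\<dots> = card ?Q"
    using finite_mult_le[OF p0] card.remove[of ?Q p] by (cases "p \<in> ?Q") simp_all
  also have "\<dots> = prime_pi (real N / real p)"
    by (rule prime_pi_div_eq_card[OF p0, symmetric])
  finally show ?thesis .
qed

end
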